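(* Let $G$ and $H$ be finite simple graphs with $\delta(G)\le\delta(H)$. Let $S$ be a minimum edge-cut in $G\times H$ and let $B,W$ be the connected components of $(G\times H)-S$. If for every $(x,y)\in V(G\times H)$ either $N_G(x)\times\{y\}\subseteq B$ or $N_G(x)\times\{y\}\subseteq W$, then $S$ is of type 2, 4, 6 or 8.
   Context: The direct product $G\times H$ has vertex set $V(G)\times V(H)$, with $(x_1,y_1)$ adjacent to $(x_2,y_2)$ if and only if $x_1x_2\in E(G)$ and $y_1y_2\in E(H)$. $\delta(F)$ is the minimum degree of $F$ and $N_G(x)$ the open neighbourhood of $x$ in $G$. For a minimum edge-cut $S$ of $G\times H$, $B$ (black) and $W$ (white) are the two connected components of $(G\times H)-S$. The types are the following shapes of $(B,W)$ (up to interchanging $B$ and $W$), all partitions being disjoint unions: Type 2: $B=V(G)\times B'$, $W=V(G)\times W'$ with $V(H)=B'\cup W'$. Type 4: $V(G)=X_1\cup X_2$, $V(H)=Y_1\cup Y_2$, $B=(X_1\times Y_1)\cup(X_2\times Y_2)$, $W=(X_1\times Y_2)\cup(X_2\times Y_1)$. Type 6: $V(G)=X\cup Y$, $V(H)=C_1\cup C_2\cup C_3$, $B=(X\times C_1)\cup(Y\times C_2)$, $W=(X\times C_2)\cup(Y\times C_1)\cup(V(G)\times C_3)$. Type 8: $V(G)=X\cup Y$, $V(H)=C_1\cup C_2\cup C_3\cup C_4$, $B=(X\times C_1)\cup(Y\times C_2)\cup(V(G)\times C_4)$, $W=(X\times C_2)\cup(Y\times C_1)\cup(V(G)\times C_3)$.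 (In the paper these types are given by a figure: in types 6 and 8 each $G$-layer $V(G)\times\{y\}$ is either monochromatic or split along a fixed partition $X\cup Y$ of $V(G)$.) *)

theory Defs
  imports Main
begin

definition sgraph :: "'v set \<Rightarrow> ('v \<Rightarrow> 'v \<Rightarrow> bool) \<Rightarrow> bool" where
  "sgraph V E \<longleftrightarrow> finite V \<and> (\<forall>u v. E u v \<longrightarrow> u \<in> V \<and> v \<in> V)
     \<and> (\<forall>u v. E u v \<longrightarrow> E v u) \<and> (\<forall>u. \<not> E u u)"

definition nbhd :: "'v set \<Rightarrow> ('v \<Rightarrow> 'v \<Rightarrow> bool) \<Rightarrow> 'v \<Rightarrow> 'v set" where
  "nbhd V E x = {y \<in> V. E x y}"

definition min_degree :: "'v set \<Rightarrow> ('v \<Rightarrow> 'v \<Rightarrow> bool) \<Rightarrow> nat" where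
  "min_degree V E = Min ((\<lambda>x. card (nbhd V E x)) ` V)"

definition edges :: "'v set \<Rightarrow> ('v \<Rightarrow> 'v \<Rightarrow> bool) \<Rightarrow> 'v set set" where
  "edges V E = {{u, v} | u v. u \<in> V \<and> v \<in> V \<and> E u v}"

definition del_edges :: "('v \<Rightarrow> 'v \<Rightarrow> bool) \<Rightarrow> 'v set set \<Rightarrow> 'v \<Rightarrow> 'v \<Rightarrow> bool" where
  "del_edges E S = (\<lambda>u v. E u v \<and> {u, v} \<notin> S)"

definition connected_graph :: "'v set \<Rightarrow> ('v \<Rightarrow> 'v \<Rightarrow> bool) \<Rightarrow> bool" where
  "connected_graph V E \<longleftrightarrow> (\<forall>u\<in>V. \<forall>v\<in>V. E\<^sup>*\<^sup>* u v)"

definition is_edge_cut :: "'v set \<Rightarrow> ('v \<Rightarrow> 'v \<Rightarrow> bool) \<Rightarrow> 'v set set \<Rightarrow> bool" where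
  "is_edge_cut V E S \<longleftrightarrow> S \<subseteq> edges V E \<and> \<not> connected_graph V (del_edges E S)"

definition is_min_edge_cut :: "'v set \<Rightarrow> ('v \<Rightarrow> 'v \<Rightarrow> bool) \<Rightarrow> 'v set set \<Rightarrow> bool" where
  "is_min_edge_cut V E S \<longleftrightarrow> is_edge_cut V E S \<and> (\<forall>T. is_edge_cut V E T \<longrightarrow> card S \<le> card T)"

definition is_component :: "'v set \<Rightarrow> ('v \<Rightarrow> 'v \<Rightarrow> bool) \<Rightarrow> 'v set \<Rightarrow> bool" where
  "is_component V E C \<longleftrightarrow> C \<noteq> {} \<and> C \<subseteq> V \<and> (\<forall>u\<in>C. \<forall>v\<in>C. E\<^sup>*\<^sup>* u v)
     \<and> (\<forall>u\<in>C. \<forall>v. E\<^sup>*\<^sup>* u v \<longrightarrow> v \<in> C)"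

definition prod_adj :: "('a \<Rightarrow> 'a \<Rightarrow> bool) \<Rightarrow> ('b \<Rightarrow> 'b \<Rightarrow> bool) \<Rightarrow> 'a \<times> 'b \<Rightarrow> 'a \<times> 'b \<Rightarrow> bool" where
  "prod_adj EG EH = (\<lambda>(x1, y1) (x2, y2). EG x1 x2 \<and> EH y1 y2)"

text \<open>The types of the partition (B,W), in this order (the caller symmetrizes).
  All unions are disjoint unions; parts may be empty.\<close>
definition type2 :: "'a set \<Rightarrow> 'b set \<Rightarrow> ('a \<times> 'b) set \<Rightarrow> ('a \<times> 'b) set \<Rightarrow> bool" where
  "type2 VG VH B W \<longleftrightarrow> (\<exists>B' W'. VH = B' \<union> W' \<and> B' \<inter> W' = {}
     \<and> B = VG \<times> B' \<and> W = VG \<times> W')"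

definition type4 :: "'a set \<Rightarrow> 'b set \<Rightarrow> ('a \<times> 'b) set \<Rightarrow> ('a \<times> 'b) set \<Rightarrow> bool" where
  "type4 VG VH B W \<longleftrightarrow> (\<exists>X1 X2 Y1 Y2. VG = X1 \<union> X2 \<and> X1 \<inter> X2 = {}
     \<and> VH = Y1 \<union> Y2 \<and> Y1 \<inter> Y2 = {}
     \<and> B = (X1 \<times> Y1) \<union> (X2 \<times> Y2) \<and> W = (X1 \<times> Y2) \<union> (X2 \<times> Y1))"

definition type6 :: "'a set \<Rightarrow> 'b set \<Rightarrow> ('a \<times> 'b) set \<Rightarrow> ('a \<times> 'b) set \<Rightarrow> bool" where
  "type6 VG VH B W \<longleftrightarrow> (\<exists>X Y C1 C2 C3. VG = X \<union> Y \<and> X \<inter> Y = {}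
     \<and> VH = C1 \<union> C2 \<union> C3 \<and> C1 \<inter> C2 = {} \<and> C1 \<inter> C3 = {} \<and> C2 \<inter> C3 = {}
     \<and> B = (X \<times> C1) \<union> (Y \<times> C2) \<and> W = (X \<times> C2) \<union> (Y \<times> C1) \<union> (VG \<times> C3))"

definition type8 :: "'a set \<Rightarrow> 'b set \<Rightarrow> ('a \<times> 'b) set \<Rightarrow> ('a \<times> 'b) set \<Rightarrow> bool" where
  "type8 VG VH B W \<longleftrightarrow> (\<exists>X Y C1 C2 C3 C4. VG = X \<union> Y \<and> X \<inter> Y = {}
     \<and> VH = C1 \<union> C2 \<union> C3 \<union> C4 \<and> C1 \<inter> C2 = {} \<and> C1 \<inter> C3 = {} \<and> C1 \<inter> C4 = {}
     \<and> C2 \<inter> C3 = {} \<and> C2 \<inter> C4 = {} \<and> C3 \<inter> C4 = {}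
     \<and> B = (X \<times> C1) \<union> (Y \<times> C2) \<union> (VG \<times> C4) \<and> W = (X \<times> C2) \<union> (Y \<times> C1) \<union> (VG \<times> C3))"

end

theory Submission
  imports Defs
begin

text \<open>
  Within a layer \<open>V(G) \<times> {y}\<close>, the hypothesis puts the two ends of every path \<open>u m v\<close> of \<open>G\<close>
  on the same side, so the colour is constant along even walks of \<open>G\<close>. If \<open>G\<close> is connected,
  every vertex is reached by an even walk either from a fixed \<open>x\<close> or from a fixed neighbour \<open>w\<close>
  of \<open>x\<close>; hence every layer is monochromatic or split along \<open>X \<union> Y\<close>, where \<open>X\<close> is the
  even class of \<open>x\<close>. If \<open>G\<close> is disconnected, walks of \<open>G \<times> H\<close> project to walks of \<open>G\<close>, so
  \<open>B = K \<times> V(H)\<close> for a union \<open>K\<close> of components of \<open>G\<close>. Either way \<open>(B, W)\<close> has type 8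
  (which, its parts being allowed to be empty, contains types 2, 4 and 6).
\<close>

lemma components_disjoint:
  assumes "is_component V E C" "is_component V E D" "C \<noteq> D"
  shows "C \<inter> D = {}"
  using assms unfolding is_component_def by blast

text \<open>\<open>(common_nbr E)\<^sup>*\<^sup>*\<close> links the ends of the walks of even length.\<close>

definition common_nbr :: "('v \<Rightarrow> 'v \<Rightarrow> bool) \<Rightarrow> 'v \<Rightarrow> 'v \<Rightarrow> bool" where
  "common_nbr E u v \<longleftrightarrow> (\<exists>m. E m u \<and> E m v)"

lemma rtranclp_even_or_odd:
  assumes "symp E" "E\<^sup>*\<^sup>* x v"
  shows "(common_nbr E)\<^sup>*\<^sup>* x v \<or> (\<exists>u. (common_nbr E)\<^sup>*\<^sup>* x u \<and> E u v)"
  using assms(2)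
proof (induction rule: rtranclp_induct)
  case base
  show ?case by simp
next
  case (step v w)
  then show ?case
    using \<open>symp E\<close> by (metis common_nbr_def rtranclp.rtrancl_into_rtrancl sympD)
qed

lemma common_nbr_rtranclp_shift:
  assumes "symp E" "(common_nbr E)\<^sup>*\<^sup>* a b" "E a p" "E b q"
  shows "(common_nbr E)\<^sup>*\<^sup>* p q"
  using assms(2,4)
proof (induction arbitrary: q rule: rtranclp_induct)
  case base
  then have "common_nbr E p q" using \<open>E a p\<close> by (auto simp: common_nbr_def)
  then show ?case by (rule r_into_rtranclp)
next
  case (step b c)
  then obtain m where "E m b" "E m c" by (auto simp: common_nbr_def)
  have "(common_nbr E)\<^sup>*\<^sup>* p m" using step.IH \<open>E m b\<close> \<open>symp E\<close> by (blast dest: sympD)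
  moreover have "common_nbr E m q"
    using \<open>E m c\<close> \<open>E c q\<close> \<open>symp E\<close> by (auto simp: common_nbr_def dest: sympD)
  ultimately show ?case by (rule rtranclp.rtrancl_into_rtrancl)
qed

lemma connected_graph_two_parity_classes:
  assumes "symp E" "connected_graph V E" "x \<in> V" "\<And>u v. E u v \<Longrightarrow> u \<in> V \<and> v \<in> V"
  obtains w where "w \<in> V" "\<And>v. v \<in> V \<Longrightarrow> (common_nbr E)\<^sup>*\<^sup>* x v \<or> (common_nbr E)\<^sup>*\<^sup>* w v"
proof (cases "\<exists>w. E x w")
  case True
  then obtain w where "E x w" by blast
  show thesis
  proof
    show "w \<in> V" using assms(4) \<open>E x w\<close> by blast
    fix v assume "v \<in> V"
    then have "E\<^sup>*\<^sup>* x v" using assms(2,3) unfolding connected_graph_def by blast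
    then show "(common_nbr E)\<^sup>*\<^sup>* x v \<or> (common_nbr E)\<^sup>*\<^sup>* w v"
      using rtranclp_even_or_odd[OF \<open>symp E\<close>] common_nbr_rtranclp_shift[OF \<open>symp E\<close> _ \<open>E x w\<close>]
      by blast
  qed
next
  case False
  show thesis
  proof \<comment> \<open>an isolated \<open>x\<close> forces \<open>V = {x}\<close>, so \<open>w = x\<close> will do\<close>
    show "x \<in> V" by fact
    fix v assume "v \<in> V"
    then have "E\<^sup>*\<^sup>* x v" using assms(2,3) unfolding connected_graph_def by blast
    then show "(common_nbr E)\<^sup>*\<^sup>* x v \<or> (common_nbr E)\<^sup>*\<^sup>* x v"
      using False by (cases rule: converse_rtranclpE) auto
  qed
qed

lemma rtranclp_prod_adj_fst:
  assumes "(prod_adj EG EH)\<^sup>*\<^sup>* p q"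
  shows "EG\<^sup>*\<^sup>* (fst p) (fst q)"
  using assms
proof (induction rule: rtranclp_induct)
  case base
  show ?case by simp
next
  case (step q r)
  then have "EG (fst q) (fst r)" by (cases q, cases r) (simp add: prod_adj_def)
  with step.IH show ?case by (rule rtranclp.rtrancl_into_rtrancl)
qed

lemma type8I:
  assumes "VG = X \<union> Y" "X \<inter> Y = {}" "B \<inter> W = {}" "B \<union> W = VG \<times> VH"
    and layers: "\<And>y. y \<in> VH \<Longrightarrow> VG \<times> {y} \<subseteq> B \<or> VG \<times> {y} \<subseteq> W
       \<or> (X \<times> {y} \<subseteq> B \<and> Y \<times> {y} \<subseteq> W) \<or> (X \<times> {y} \<subseteq> W \<and> Y \<times> {y} \<subseteq> B)"
  shows "type8 VG VH B W"
proof -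
  define C4 where "C4 = {y \<in> VH. VG \<times> {y} \<subseteq> B}"
  define C3 where "C3 = {y \<in> VH. VG \<times> {y} \<subseteq> W} - C4"
  define C1 where "C1 = {y \<in> VH. X \<times> {y} \<subseteq> B \<and> Y \<times> {y} \<subseteq> W} - C3 - C4"
  define C2 where "C2 = VH - C1 - C3 - C4"
  have C2: "X \<times> {y} \<subseteq> W \<and> Y \<times> {y} \<subseteq> B" if "y \<in> C2" for y
    using layers[of y] that unfolding C1_def C2_def C3_def C4_def by blast
  have VH: "VH = C1 \<union> C2 \<union> C3 \<union> C4" and disj: "C1 \<inter> C2 = {}" "C1 \<inter> C3 = {}" "C1 \<inter> C4 = {}"
     "C2 \<inter> C3 = {}" "C2 \<inter> C4 = {}" "C3 \<inter> C4 = {}"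
    unfolding C1_def C2_def C3_def C4_def by blast+
  have colour: "(x, y) \<in> B \<longleftrightarrow> (x \<in> X \<and> y \<in> C1) \<or> (x \<in> Y \<and> y \<in> C2) \<or> y \<in> C4"
    if "x \<in> VG" "y \<in> VH" for x y
    using layers[OF \<open>y \<in> VH\<close>] C2[of y] that assms(1-3) unfolding C1_def C2_def C3_def C4_def
    by (elim disjE) auto
  have W: "W = VG \<times> VH - B"
    using assms(3,4) by blast
  have "B = (X \<times> C1) \<union> (Y \<times> C2) \<union> (VG \<times> C4)"
    using colour assms(1,4) VH by auto
  moreover have "W = (X \<times> C2) \<union> (Y \<times> C1) \<union> (VG \<times> C3)"
    unfolding W using colour assms(1,2) VH disj by auto
  ultimately show ?thesis
    using VH disj assms(1,2) unfolding type8_def by blast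
qed

lemma layer_colour_constant_on_even_walks:
  assumes "\<And>u v. E u v \<Longrightarrow> u \<in> V \<and> v \<in> V" "B \<inter> W = {}" "y \<in> VH"
    and "\<forall>x\<in>V. \<forall>y\<in>VH. nbhd V E x \<times> {y} \<subseteq> B \<or> nbhd V E x \<times> {y} \<subseteq> W"
    and "(common_nbr E)\<^sup>*\<^sup>* u v"
  shows "(u, y) \<in> B \<longleftrightarrow> (v, y) \<in> B"
  using assms(5)
proof (induction rule: rtranclp_induct)
  case (step v w)
  then obtain m where "E m v" "E m w" by (auto simp: common_nbr_def)
  then have "m \<in> V" "v \<in> nbhd V E m" "w \<in> nbhd V E m" using assms(1) by (auto simp: nbhd_def)
  then have "(v, y) \<in> B \<longleftrightarrow> (w, y) \<in> B" using assms(2-4) by blast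
  with step.IH show ?case by simp
qed simp

lemma type8_if_connected:
  assumes "symp EG" "\<And>u v. EG u v \<Longrightarrow> u \<in> VG \<and> v \<in> VG" "connected_graph VG EG" "x \<in> VG"
    and "B \<inter> W = {}" "VG \<times> VH = B \<union> W"
    and "\<forall>x\<in>VG. \<forall>y\<in>VH. nbhd VG EG x \<times> {y} \<subseteq> B \<or> nbhd VG EG x \<times> {y} \<subseteq> W"
  shows "type8 VG VH B W"
proof -
  obtain w where "w \<in> VG" and parity: "\<And>v. v \<in> VG \<Longrightarrow> (common_nbr EG)\<^sup>*\<^sup>* x v \<or> (common_nbr EG)\<^sup>*\<^sup>* w v"
    using connected_graph_two_parity_classes assms(1-4) by metis
  define X where "X = {v \<in> VG. (common_nbr EG)\<^sup>*\<^sup>* x v}"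
  show ?thesis
  proof (rule type8I[of VG X "VG - X"])
    fix y assume "y \<in> VH"
    note layer = layer_colour_constant_on_even_walks[OF assms(2,5) \<open>y \<in> VH\<close> assms(7)]
    have "(v, y) \<in> B \<longleftrightarrow> (x, y) \<in> B" if "v \<in> X" for v
      using layer that by (auto simp: X_def)
    moreover have "(v, y) \<in> B \<longleftrightarrow> (w, y) \<in> B" if "v \<in> VG - X" for v
      using layer parity that by (auto simp: X_def)
    ultimately show "VG \<times> {y} \<subseteq> B \<or> VG \<times> {y} \<subseteq> W
       \<or> (X \<times> {y} \<subseteq> B \<and> (VG - X) \<times> {y} \<subseteq> W) \<or> (X \<times> {y} \<subseteq> W \<and> (VG - X) \<times> {y} \<subseteq> B)"
      using assms(6) \<open>y \<in> VH\<close> by (cases "(x, y) \<in> B"; cases "(w, y) \<in> B") (auto simp: X_def)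
  qed (use assms(5,6) in \<open>auto simp: X_def\<close>)
qed

lemma type8_if_disconnected:
  assumes "symp EG" "F \<le> prod_adj EG EH"
    and "is_component (VG \<times> VH) F B" "is_component (VG \<times> VH) F W"
    and "B \<inter> W = {}" "VG \<times> VH = B \<union> W"
    and "(a, y) \<in> B" "b \<in> VG" "\<not> EG\<^sup>*\<^sup>* a b"
  shows "type8 VG VH B W"
proof -
  define K where "K = {x \<in> VG. EG\<^sup>*\<^sup>* a x}"
  have walk: "EG\<^sup>*\<^sup>* (fst p) (fst q)" if "is_component (VG \<times> VH) F C" "p \<in> C" "q \<in> C" for C p q
  proof -
    have "F\<^sup>*\<^sup>* p q" using that unfolding is_component_def by blast
    then have "(prod_adj EG EH)\<^sup>*\<^sup>* p q" by (rule predicate2D[OF rtranclp_mono[OF assms(2)]])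
    then show ?thesis by (rule rtranclp_prod_adj_fst)
  qed
  have "y \<in> VH" using assms(3,7) unfolding is_component_def by blast
  have "(b, y) \<notin> B"
  proof
    assume "(b, y) \<in> B"
    from walk[OF assms(3,7) this] assms(9) show False by simp
  qed
  then have "(b, y) \<in> W" using assms(6,8) \<open>y \<in> VH\<close> by blast
  have in_K: "x \<in> K" if "(x, y') \<in> B" for x y'
    using walk[OF assms(3,7) that] that assms(3) unfolding K_def is_component_def by auto
  have not_in_K: "x \<notin> K" if "(x, y') \<in> W" for x y'
  proof
    assume "x \<in> K"
    have "EG\<^sup>*\<^sup>* b x" using walk[OF assms(4) \<open>(b, y) \<in> W\<close> that] by simp
    then have "EG\<^sup>*\<^sup>* x b" by (rule sympD[OF symp_rtranclp[OF assms(1)]])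
    with \<open>x \<in> K\<close> have "EG\<^sup>*\<^sup>* a b" unfolding K_def by (blast intro: rtranclp_trans)
    with assms(9) show False ..
  qed
  show ?thesis
  proof (rule type8I[of VG K "VG - K"])
    fix y' assume "y' \<in> VH"
    then have "K \<times> {y'} \<subseteq> B \<and> (VG - K) \<times> {y'} \<subseteq> W"
      using in_K not_in_K assms(6) unfolding K_def by blast
    then show "VG \<times> {y'} \<subseteq> B \<or> VG \<times> {y'} \<subseteq> W
       \<or> (K \<times> {y'} \<subseteq> B \<and> (VG - K) \<times> {y'} \<subseteq> W) \<or> (K \<times> {y'} \<subseteq> W \<and> (VG - K) \<times> {y'} \<subseteq> B)"
      by blast
  qed (use assms(5,6) in \<open>auto simp: K_def\<close>)
qed

theorem corollary2p8:
  fixes VG :: "'a set" and EG :: "'a \<Rightarrow> 'a \<Rightarrow> bool"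
    and VH :: "'b set" and EH :: "'b \<Rightarrow> 'b \<Rightarrow> bool"
    and S :: "('a \<times> 'b) set set" and B W :: "('a \<times> 'b) set"
  assumes "sgraph VG EG" and "sgraph VH EH"
    and "min_degree VG EG \<le> min_degree VH EH"
    and "is_min_edge_cut (VG \<times> VH) (prod_adj EG EH) S"
    and "is_component (VG \<times> VH) (del_edges (prod_adj EG EH) S) B"
    and "is_component (VG \<times> VH) (del_edges (prod_adj EG EH) S) W"
    and "B \<noteq> W" and "VG \<times> VH = B \<union> W"
    and "\<forall>x\<in>VG. \<forall>y\<in>VH. nbhd VG EG x \<times> {y} \<subseteq> B \<or> nbhd VG EG x \<times> {y} \<subseteq> W"
  shows "type2 VG VH B W \<or> type2 VG VH W B \<or> type4 VG VH B W \<or> type4 VG VH W B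
       \<or> type6 VG VH B W \<or> type6 VG VH W B \<or> type8 VG VH B W \<or> type8 VG VH W B"
proof -
  have "symp EG" and edges_in: "\<And>u v. EG u v \<Longrightarrow> u \<in> VG \<and> v \<in> VG"
    using assms(1) unfolding sgraph_def by (auto intro: sympI)
  have "B \<inter> W = {}" using components_disjoint assms(5-7) .
  obtain x y where "(x, y) \<in> B" and "x \<in> VG"
    using assms(5) unfolding is_component_def by auto
  have "type8 VG VH B W"
  proof (cases "connected_graph VG EG")
    case True
    show ?thesis
      using type8_if_connected[OF \<open>symp EG\<close> edges_in True \<open>x \<in> VG\<close> \<open>B \<inter> W = {}\<close> assms(8,9)] .
  next
    case False
    then obtain a c where "a \<in> VG" "c \<in> VG" "\<not> EG\<^sup>*\<^sup>* a c"
      unfolding connected_graph_def by blast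
    then obtain b where "b \<in> VG" "\<not> EG\<^sup>*\<^sup>* x b"
      using sympD[OF symp_rtranclp[OF \<open>symp EG\<close>]] by (metis rtranclp_trans)
    moreover have "del_edges (prod_adj EG EH) S \<le> prod_adj EG EH"
      by (auto simp: del_edges_def)
    ultimately show ?thesis
      using type8_if_disconnected[OF \<open>symp EG\<close> _ assms(5,6) \<open>B \<inter> W = {}\<close> assms(8) \<open>(x, y) \<in> B\<close>]
      by blast
  qed
  then show ?thesis by blast
qed

end
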